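(* Let $n$ be a power of $2$ and let $A\subseteq\{0,1\}^{\log n}$ be arbitrary. For every $\epsilon>0$, the property $P_A=\{x\in\{0,1\}^n:\exists y\in A,\ x=h(y)\}$ has a quantum property tester with distance parameter $\epsilon$ that makes $O(1/\epsilon)$ queries (the constant independent of $n$ and $A$) and has one-sided error.
   Context: Logarithms are base 2. Positions $i\in\{1,\dots,n\}$ of a string of length $n$ are identified with vectors in $\mathbb{F}_2^{\log n}$. The Hadamard code of $y\in\{0,1\}^{\log n}$ is $h(y)\in\{0,1\}^n$ with $h(y)_i=y\cdot i$ (inner product over $\mathbb{F}_2$). For $P\subseteq\{0,1\}^n$, $x$ is $\epsilon$-far from $P$ if it differs from every $y\in P$ in more than $\epsilon n$ positions. A quantum property tester for $P$ with distance parameter $\epsilon$ is a quantum algorithm with oracle $O_x:\lvert i,b,z\rangle\mapsto\lvert i,b\oplus x_i,z\rangle$ that accepts every $x\in P$ with probability at least $2/3$ and every $x$ that is $\epsilon$-far from $P$ with probability at most $1/3$; one-sided error means every $x\in P$ is accepted with probability $1$. Complexity is the number of oracle queries. *)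

theory Defs
  imports Complex_Main
begin

text \<open>Bit strings of length n are functions nat \<Rightarrow> bool; only positions 0..n-1 matter.
  Vectors in F_2^k are encoded as naturals below 2^k (bit j = coordinate j).\<close>

definition ip2 :: "nat \<Rightarrow> nat \<Rightarrow> nat \<Rightarrow> bool" where
  "ip2 k y i = odd (card {j. j < k \<and> bit y j \<and> bit i j})"

definition hadamard :: "nat \<Rightarrow> nat \<Rightarrow> (nat \<Rightarrow> bool)" where
  "hadamard k y = (\<lambda>i. ip2 k y i)"

definition P_A :: "nat \<Rightarrow> nat set \<Rightarrow> (nat \<Rightarrow> bool) set" where
  "P_A k A = {x. \<exists>y\<in>A. \<forall>i<2^k. x i = hadamard k y i}"

definition hdist :: "nat \<Rightarrow> (nat \<Rightarrow> bool) \<Rightarrow> (nat \<Rightarrow> bool) \<Rightarrow> nat" where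
  "hdist n x y = card {i. i < n \<and> x i \<noteq> y i}"

definition eps_far :: "nat \<Rightarrow> real \<Rightarrow> (nat \<Rightarrow> bool) set \<Rightarrow> (nat \<Rightarrow> bool) \<Rightarrow> bool" where
  "eps_far n \<epsilon> P x = (\<forall>y\<in>P. real (hdist n x y) > \<epsilon> * real n)"

text \<open>The Hilbert space has orthonormal basis |i,b,z\<rangle>
  with i < n, b \<in> {0,1}, z < W (workspace), encoded as the index (2*i + b)*W + z < 2*n*W.
  Matrices are functions nat \<Rightarrow> nat \<Rightarrow> complex, meaningful on indices below D = 2*n*W.\<close>

type_synonym cmatrix = "nat \<Rightarrow> nat \<Rightarrow> complex"
type_synonym cvector = "nat \<Rightarrow> complex"

definition unitary_mat :: "nat \<Rightarrow> cmatrix \<Rightarrow> bool" where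
  "unitary_mat D U = (\<forall>r<D. \<forall>c<D.
     (\<Sum>m<D. cnj (U m r) * U m c) = (if r = c then 1 else 0))"

definition mat_app :: "nat \<Rightarrow> cmatrix \<Rightarrow> cvector \<Rightarrow> cvector" where
  "mat_app D M v = (\<lambda>r. if r < D then (\<Sum>c<D. M r c * v c) else 0)"

definition basis_idx :: "nat \<Rightarrow> nat \<Rightarrow> bool \<Rightarrow> nat \<Rightarrow> nat" where
  "basis_idx W i b z = (2 * i + (if b then 1 else 0)) * W + z"

text \<open>The oracle O_x : |i,b,z\<rangle> \<mapsto> |i, b xor x_i, z\<rangle> as a permutation matrix.\<close>
definition oracle_target :: "nat \<Rightarrow> (nat \<Rightarrow> bool) \<Rightarrow> nat \<Rightarrow> nat" where
  "oracle_target W x c =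
     (let z = c mod W; b = odd (c div W); i = c div W div 2
      in basis_idx W i (b \<noteq> x i) z)"

definition oracle_mat :: "nat \<Rightarrow> (nat \<Rightarrow> bool) \<Rightarrow> cmatrix" where
  "oracle_mat W x = (\<lambda>r c. if r = oracle_target W x c then 1 else 0)"

text \<open>Algorithm: U_0, then (O_x, U_1), ..., (O_x, U_T); T = length Us queries.
  Start state |0\<rangle>; final measurement in the computational basis, accept iff the
  outcome is in Acc.\<close>
definition final_state :: "nat \<Rightarrow> nat \<Rightarrow> (nat \<Rightarrow> bool) \<Rightarrow> cmatrix \<Rightarrow> cmatrix list \<Rightarrow> cvector" where
  "final_state n W x U0 Us =
     (let D = 2 * n * W
      in foldl (\<lambda>v U. mat_app D U (mat_app D (oracle_mat W x) v))
               (mat_app D U0 (\<lambda>r. if r = 0 then 1 else 0)) Us)"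

definition accept_prob :: "nat \<Rightarrow> nat \<Rightarrow> (nat \<Rightarrow> bool) \<Rightarrow> cmatrix \<Rightarrow> cmatrix list \<Rightarrow> nat set \<Rightarrow> real" where
  "accept_prob n W x U0 Us Acc = (\<Sum>r\<in>Acc. (cmod (final_state n W x U0 Us r))^2)"

definition one_sided_quantum_tester :: "nat \<Rightarrow> (nat \<Rightarrow> bool) set \<Rightarrow> real \<Rightarrow> nat \<Rightarrow> bool" where
  "one_sided_quantum_tester n P \<epsilon> T =
     (\<exists>W U0 Us Acc. W > 0 \<and> length Us = T \<and>
        unitary_mat (2 * n * W) U0 \<and> (\<forall>U\<in>set Us. unitary_mat (2 * n * W) U) \<and>
        Acc \<subseteq> {..<2 * n * W} \<and>
        (\<forall>x\<in>P. accept_prob n W x U0 Us Acc = 1) \<and>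
        (\<forall>x. eps_far n \<epsilon> P x \<longrightarrow> accept_prob n W x U0 Us Acc \<le> 1/3))"

end

theory Submission
  imports Defs
begin

(* Take m = ceil(2/eps) random positions rs = (r_1, ..., r_m) and a further position t, all in
   uniform superposition. The tester queries x at every r_q and records the answers, multiplies
   the amplitude by (-1)^(x_t) by phase kickback, applies the Hadamard transform to the register
   holding t and measures. It accepts an outcome (s, rs) iff s is in A and the recorded answers
   agree with h(s). The outcome (s, rs) then has probability [x agrees with h(s) on rs] F(s)^2 / n^(m+2),
   where F(s) = sum_t (-1)^(x_t + s.t), so the acceptance probability is
   sum_{s in A} (a_s / n)^m (F(s) / n)^2 with a_s the number of positions where x and h(s) agree.
   If x = h(y) with y in A, then F(s) = n [s = y] and a_y = n, so x is accepted with certainty.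
   If x is eps-far, every a_s is below (1 - eps) n and Parseval's identity sum_s F(s)^2 = n^2
   bounds the probability by (1 - eps)^m <= exp(-2) < 1/3, using m + 2 = O(1/eps) queries.
   For eps >= 1 nothing is eps-far unless A is empty, so no query is needed. *)

section \<open>Walsh characters\<close>

lemma not_bit_ge_length:
  fixes s :: nat
  assumes "s < 2 ^ k" "k \<le> j"
  shows "\<not> bit s j"
  by (metis assms bit_take_bit_iff leD take_bit_nat_eq_self)

lemma bit_add_pow_below:
  fixes i :: nat
  assumes "i < 2 ^ k"
  shows "bit (i + 2 ^ k) j \<longleftrightarrow> j = k \<or> bit i j"
proof -
  have "bit (i + 2 ^ k) j \<longleftrightarrow> bit i j \<or> bit ((2::nat) ^ k) j"
    by (rule bit_disjunctive_add_iff) (use assms not_bit_ge_length in \<open>auto simp: bit_exp_iff\<close>)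
  then show ?thesis by (auto simp: bit_exp_iff)
qed

lemma ip2_Suc: "ip2 (Suc k) y i \<longleftrightarrow> ip2 k y i \<noteq> (bit y k \<and> bit i k)"
proof -
  have "{j. j < Suc k \<and> bit y j \<and> bit i j}
      = {j. j < k \<and> bit y j \<and> bit i j} \<union> (if bit y k \<and> bit i k then {k} else {})"
    by (auto simp: less_Suc_eq)
  then show ?thesis unfolding ip2_def by (auto simp: card_insert_if)
qed

lemma ip2_add_pow: "(i::nat) < 2 ^ k \<Longrightarrow> ip2 k y (i + 2 ^ k) = ip2 k y i"
  unfolding ip2_def by (simp add: bit_add_pow_below cong: conj_cong)

lemma ip2_commute: "ip2 k y i = ip2 k i y"
  unfolding ip2_def by (simp add: conj_commute)

definition walsh :: "nat \<Rightarrow> nat \<Rightarrow> nat \<Rightarrow> real" where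
  "walsh k s t = (if ip2 k s t then -1 else 1)"

lemma walsh_commute: "walsh k s t = walsh k t s"
  by (simp add: walsh_def ip2_commute[of k s t])

lemma sum_lessThan_add_nat: "(\<Sum>t<a + b. f t) = (\<Sum>t<a. f t) + (\<Sum>t<b. f (a + t :: nat))"
  by (induction b) (auto simp: add.commute add.left_commute)

lemma sum_walsh_mult:
  "(\<Sum>t<2 ^ k. walsh k s t * walsh k s' t) = (if \<forall>j<k. bit s j = bit s' j then 2 ^ k else 0)"
proof (induction k)
  case 0
  then show ?case by (simp add: walsh_def ip2_def)
next
  case (Suc k)
  define sgn :: real where "sgn = (if bit s k = bit s' k then 1 else -1)"
  have low: "walsh (Suc k) s t * walsh (Suc k) s' t = walsh k s t * walsh k s' t"
    if "t < 2 ^ k" for t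
    using that not_bit_ge_length[of t k k] by (simp add: walsh_def ip2_Suc)
  have high: "walsh (Suc k) s (2 ^ k + t) * walsh (Suc k) s' (2 ^ k + t)
      = walsh k s t * walsh k s' t * sgn" if "t < 2 ^ k" for t
    using that by (simp add: walsh_def sgn_def ip2_Suc add.commute[of "2 ^ k"] ip2_add_pow
        bit_add_pow_below)
  have "(\<Sum>t<2 ^ Suc k. walsh (Suc k) s t * walsh (Suc k) s' t)
      = (\<Sum>t<2 ^ k. walsh k s t * walsh k s' t) + (\<Sum>t<2 ^ k. walsh k s t * walsh k s' t * sgn)"
    using sum_lessThan_add_nat[of "\<lambda>t. walsh (Suc k) s t * walsh (Suc k) s' t" "2 ^ k" "2 ^ k"]
    by (simp add: low high mult_2)
  also have "\<dots> = (\<Sum>t<2 ^ k. walsh k s t * walsh k s' t) * (1 + sgn)"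
    by (simp add: sum_distrib_right distrib_left)
  also have "\<dots> = (if \<forall>j<Suc k. bit s j = bit s' j then 2 ^ Suc k else 0)"
    unfolding Suc.IH sgn_def by (auto simp: less_Suc_eq)
  finally show ?case .
qed

lemma walsh_orthogonal:
  assumes "s < 2 ^ k" "s' < 2 ^ k"
  shows "(\<Sum>t<2 ^ k. walsh k s t * walsh k s' t) = (if s = s' then 2 ^ k else 0)"
proof -
  have "(\<forall>j<k. bit s j = bit s' j) \<longleftrightarrow> s = s'"
    using assms not_bit_ge_length by (metis bit_eqI not_le)
  then show ?thesis by (simp add: sum_walsh_mult)
qed

theorem walsh_parseval:
  "(\<Sum>s<2 ^ k. (\<Sum>t<2 ^ k. f t * walsh k s t)\<^sup>2) = 2 ^ k * (\<Sum>t<2 ^ k. (f t)\<^sup>2)"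
proof -
  have "(\<Sum>s<2 ^ k. (\<Sum>t<2 ^ k. f t * walsh k s t)\<^sup>2)
      = (\<Sum>s<2 ^ k. \<Sum>t<2 ^ k. \<Sum>t'<2 ^ k. f t * f t' * (walsh k t s * walsh k t' s))"
    unfolding power2_eq_square sum_product by (simp add: walsh_commute mult_ac)
  also have "\<dots> = (\<Sum>t<2 ^ k. \<Sum>s<2 ^ k. \<Sum>t'<2 ^ k. f t * f t' * (walsh k t s * walsh k t' s))"
    by (rule sum.swap)
  also have "\<dots> = (\<Sum>t<2 ^ k. \<Sum>t'<2 ^ k. \<Sum>s<2 ^ k. f t * f t' * (walsh k t s * walsh k t' s))"
    by (intro sum.cong refl sum.swap)
  also have "\<dots> = (\<Sum>t<2 ^ k. \<Sum>t'<2 ^ k. f t * f t' * (\<Sum>s<2 ^ k. walsh k t s * walsh k t' s))"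
    by (simp only: sum_distrib_left)
  also have "\<dots> = (\<Sum>t<2 ^ k. \<Sum>t'<2 ^ k. if t = t' then 2 ^ k * (f t)\<^sup>2 else 0)"
    by (intro sum.cong refl) (simp add: walsh_orthogonal power2_eq_square)
  also have "\<dots> = 2 ^ k * (\<Sum>t<2 ^ k. (f t)\<^sup>2)"
    by (simp add: sum_distrib_left)
  finally show ?thesis .
qed

section \<open>Superpositions and monomial matrices\<close>

definition superpos :: "'l set \<Rightarrow> ('l \<Rightarrow> 'a::comm_monoid_add) \<Rightarrow> ('l \<Rightarrow> nat) \<Rightarrow> nat \<Rightarrow> 'a" where
  "superpos L a p = (\<lambda>r. \<Sum>l\<in>L. if p l = r then a l else 0)"

lemma superpos_at: "finite L \<Longrightarrow> inj_on p L \<Longrightarrow> l \<in> L \<Longrightarrow> superpos L a p (p l) = a l"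
  unfolding superpos_def
  by (subst sum.cong[OF refl, where h = "\<lambda>l'. if l' = l then a l' else 0"])
    (auto simp: inj_on_def)

lemma superpos_outside: "r \<notin> p ` L \<Longrightarrow> superpos L a p r = 0"
  unfolding superpos_def by (auto intro!: sum.neutral)

lemma superpos_cong:
  "(\<And>l. l \<in> L \<Longrightarrow> a l = a' l) \<Longrightarrow> (\<And>l. l \<in> L \<Longrightarrow> p l = p' l) \<Longrightarrow>
    superpos L a p = superpos L a' p'"
  unfolding superpos_def by (auto intro!: sum.cong)

lemma sum_superpos:
  assumes "finite L" "inj_on p L" "p ` L \<subseteq> S" "finite S" "g 0 = 0"
  shows "(\<Sum>r\<in>S. g (superpos L a p r)) = (\<Sum>l\<in>L. g (a l))"
proof -
  have "(\<Sum>r\<in>S. g (superpos L a p r)) = (\<Sum>r\<in>p ` L. g (superpos L a p r))"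
    by (rule sum.mono_neutral_right) (use assms in \<open>auto simp: superpos_outside\<close>)
  also have "\<dots> = (\<Sum>l\<in>L. g (superpos L a p (p l)))"
    using assms(2) by (simp add: sum.reindex)
  also have "\<dots> = (\<Sum>l\<in>L. g (a l))"
    using assms by (simp add: superpos_at)
  finally show ?thesis .
qed

lemma mat_app_superpos:
  assumes "finite L" "\<And>l. l \<in> L \<Longrightarrow> p l < D"
  shows "mat_app D M (superpos L a p) = (\<lambda>r. if r < D then \<Sum>l\<in>L. a l * M r (p l) else 0)"
proof -
  have entry: "(\<Sum>c<D. M r c * superpos L a p c) = (\<Sum>l\<in>L. a l * M r (p l))" for r
  proof -
    have "(\<Sum>c<D. M r c * superpos L a p c) = (\<Sum>l\<in>L. \<Sum>c<D. if p l = c then a l * M r c else 0)"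
      unfolding superpos_def sum_distrib_left by (subst sum.swap) (auto intro!: sum.cong)
    then show ?thesis
      using assms(2) by simp
  qed
  show ?thesis
    unfolding mat_app_def using entry by auto
qed

definition monomial_mat :: "(nat \<Rightarrow> nat) \<Rightarrow> (nat \<Rightarrow> complex) \<Rightarrow> cmatrix" where
  "monomial_mat f \<sigma> = (\<lambda>r c. if r = f c then \<sigma> c else 0)"

lemma mat_app_monomial_superpos:
  assumes "finite L" "\<And>l. l \<in> L \<Longrightarrow> p l < D" "\<And>l. l \<in> L \<Longrightarrow> f (p l) < D"
  shows "mat_app D (monomial_mat f \<sigma>) (superpos L a p)
    = superpos L (\<lambda>l. \<sigma> (p l) * a l) (\<lambda>l. f (p l))"
proof
  fix r
  show "mat_app D (monomial_mat f \<sigma>) (superpos L a p) r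
      = superpos L (\<lambda>l. \<sigma> (p l) * a l) (\<lambda>l. f (p l)) r"
  proof (cases "r < D")
    case True
    then have "mat_app D (monomial_mat f \<sigma>) (superpos L a p) r
        = (\<Sum>l\<in>L. a l * monomial_mat f \<sigma> r (p l))"
      by (simp add: mat_app_superpos[OF assms(1,2)])
    then show ?thesis
      by (auto simp: superpos_def monomial_mat_def mult.commute intro!: sum.cong)
  next
    case False
    then have "r \<notin> (\<lambda>l. f (p l)) ` L"
      using assms(3) by force
    then show ?thesis
      using False by (simp add: mat_app_def superpos_outside)
  qed
qed

lemma unitary_monomial_mat:
  assumes "bij_betw f {..<D} {..<D}" "\<And>c. c < D \<Longrightarrow> cnj (\<sigma> c) * \<sigma> c = 1"
  shows "unitary_mat D (monomial_mat f \<sigma>)"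
  unfolding unitary_mat_def
proof (intro allI impI)
  fix r c assume r: "r < D" and c: "c < D"
  have "f r < D"
    using assms(1) r by (auto simp: bij_betw_def)
  have "(\<Sum>m<D. cnj (monomial_mat f \<sigma> m r) * monomial_mat f \<sigma> m c)
      = (\<Sum>m<D. if m = f r then (if f r = f c then cnj (\<sigma> r) * \<sigma> c else 0) else 0)"
    by (rule sum.cong) (auto simp: monomial_mat_def)
  also have "\<dots> = (if f r = f c then cnj (\<sigma> r) * \<sigma> c else 0)"
    using \<open>f r < D\<close> by simp
  also have "\<dots> = (if r = c then 1 else 0)"
    using assms r c by (auto simp: bij_betw_def inj_on_def)
  finally show "(\<Sum>m<D. cnj (monomial_mat f \<sigma> m r) * monomial_mat f \<sigma> m c) = (if r = c then 1 else 0)" .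
qed

lemma ex_permutation_mapping:
  assumes "finite U" "inj_on p R" "inj_on p' R" "p ` R \<subseteq> U" "p' ` R \<subseteq> U"
  shows "\<exists>f. bij_betw f U U \<and> (\<forall>x\<in>R. f (p x) = p' x)"
proof -
  define g where "g = p' \<circ> inv_into R p"
  have g: "bij_betw g (p ` R) (p' ` R)"
    using assms(2,3) unfolding g_def
    by (metis bij_betw_comp_iff bij_betw_imageI bij_betw_inv_into inj_on_imp_bij_betw)
  have "finite (p ` R)" "finite (p' ` R)"
    using assms finite_subset by blast+
  then have "card (U - p ` R) = card (U - p' ` R)"
    using assms bij_betw_same_card[OF g] by (simp add: card_Diff_subset)
  then obtain h where h: "bij_betw h (U - p ` R) (U - p' ` R)"
    using assms(1) finite_same_card_bij by blast
  define f where "f c = (if c \<in> p ` R then g c else h c)" for c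
  have "bij_betw f (p ` R \<union> (U - p ` R)) (p' ` R \<union> (U - p' ` R))"
  proof (rule bij_betw_combine)
    show "bij_betw f (p ` R) (p' ` R)"
      using g by (rule bij_betw_cong[THEN iffD1, rotated]) (simp add: f_def)
    show "bij_betw f (U - p ` R) (U - p' ` R)"
      using h by (rule bij_betw_cong[THEN iffD1, rotated]) (simp add: f_def)
  qed auto
  moreover have "p ` R \<union> (U - p ` R) = U" "p' ` R \<union> (U - p' ` R) = U"
    using assms by auto
  moreover have "f (p x) = p' x" if "x \<in> R" for x
    using that assms(2) by (simp add: f_def g_def)
  ultimately show ?thesis
    by auto
qed

lemma unitary_of_real:
  assumes "\<And>r c. r < D \<Longrightarrow> c < D \<Longrightarrow> (\<Sum>m<D. V m r * V m c) = (if r = c then 1 else 0)"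
  shows "unitary_mat D (\<lambda>r c. complex_of_real (V r c))"
  unfolding unitary_mat_def
  by (simp flip: of_real_mult of_real_sum add: assms)

lemma ex_unitary_first_column:
  fixes \<psi> :: "nat \<Rightarrow> real"
  assumes D: "0 < D" and norm: "(\<Sum>r<D. (\<psi> r)\<^sup>2) = 1"
  shows "\<exists>U. unitary_mat D U \<and> (\<forall>r<D. U r 0 = complex_of_real (\<psi> r))"
proof (cases "\<psi> 0 = 1")
  case True
  have "(\<Sum>r<D. (\<psi> r)\<^sup>2) = (\<psi> 0)\<^sup>2 + (\<Sum>r\<in>{..<D} - {0}. (\<psi> r)\<^sup>2)"
    using D by (subst sum.remove[of _ 0]) auto
  then have "\<forall>r\<in>{..<D} - {0}. (\<psi> r)\<^sup>2 = 0"
    using norm True by (subst sum_nonneg_eq_0_iff[symmetric]) auto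
  then have "\<psi> r = (if r = 0 then 1 else 0)" if "r < D" for r
    using that True by auto
  moreover have "unitary_mat D (monomial_mat id (\<lambda>_. 1))"
    by (rule unitary_monomial_mat) auto
  ultimately show ?thesis
    by (intro exI[of _ "monomial_mat id (\<lambda>_. 1)"]) (simp add: monomial_mat_def)
next
  case False
  text \<open>The Householder reflection exchanging the first basis vector and \<open>\<psi>\<close>.\<close>
  define w where "w r = (if r = 0 then 1 else 0) - \<psi> r" for r
  define N where "N = (\<Sum>r<D. (w r)\<^sup>2)"
  have rest: "(\<Sum>r\<in>{..<D} - {0}. (\<psi> r)\<^sup>2) = 1 - (\<psi> 0)\<^sup>2"
    using norm D by (subst (asm) sum.remove[of _ 0]) auto
  then have "(\<psi> 0)\<^sup>2 \<le> 1"
    by (metis diff_ge_0_iff_ge sum_nonneg zero_le_power2)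
  then have "\<psi> 0 < 1"
    using False by (metis abs_le_D1 abs_square_le_1 order_less_le)
  have "N = (w 0)\<^sup>2 + (\<Sum>r\<in>{..<D} - {0}. (\<psi> r)\<^sup>2)"
    unfolding N_def using D by (subst sum.remove[of _ 0]) (auto simp: w_def)
  then have N: "N = 2 - 2 * \<psi> 0"
    unfolding rest by (simp add: w_def power2_eq_square algebra_simps)
  with \<open>\<psi> 0 < 1\<close> have "N > 0"
    by simp
  define V where "V r c = (if r = c then 1 else 0) - 2 * w r * w c / N" for r c
  have "unitary_mat D (\<lambda>r c. complex_of_real (V r c))"
  proof (rule unitary_of_real)
    fix r c assume r: "r < D" and c: "c < D"
    define a where "a = 2 * w r / N"
    define b where "b = 2 * w c / N"
    have "(\<Sum>m<D. V m r * V m c) = (\<Sum>m<D. ((if m = r then (if r = c then 1 else 0) else 0)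
        - (if m = r then b * w r else 0)) - ((if m = c then a * w c else 0) - (a * b) * (w m)\<^sup>2))"
      unfolding V_def a_def b_def by (rule sum.cong) (auto simp: power2_eq_square algebra_simps)
    also have "\<dots> = ((if r = c then 1 else 0) - b * w r) - (a * w c - (a * b) * N)"
      using r c unfolding N_def by (simp only: sum_subtractf sum_distrib_left[symmetric]) simp
    also have "\<dots> = (if r = c then 1 else 0)"
      using \<open>N > 0\<close> unfolding a_def b_def by (simp add: power2_eq_square field_simps)
    finally show "(\<Sum>m<D. V m r * V m c) = (if r = c then 1 else 0)" .
  qed
  moreover have "V r 0 = \<psi> r" for r
  proof -
    have "2 * w 0 / N = 1"
      using \<open>N > 0\<close> by (simp add: N w_def)
    moreover have "V r 0 = (if r = 0 then 1 else 0) - w r * (2 * w 0 / N)"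
      by (simp add: V_def)
    ultimately show ?thesis
      by (simp add: w_def)
  qed
  ultimately show ?thesis
    by auto
qed

lemma sum_lessThan_mult_nat: "(\<Sum>i<n * q. f i) = (\<Sum>s<n. \<Sum>u<q. f (s * q + u :: nat))"
  by (induction n) (simp_all add: add.commute[of q] sum_lessThan_add_nat)

definition tensor_id :: "nat \<Rightarrow> cmatrix \<Rightarrow> cmatrix" where
  "tensor_id q H = (\<lambda>r c. if r mod q = c mod q then H (r div q) (c div q) else 0)"

lemma unitary_tensor_id:
  assumes H: "unitary_mat n H" and q: "0 < q"
  shows "unitary_mat (n * q) (tensor_id q H)"
  unfolding unitary_mat_def
proof (intro allI impI)
  fix r c assume r: "r < n * q" and c: "c < n * q"
  have "r div q < n" "c div q < n"
    using r c q by (auto simp: div_less_iff_less_mult mult.commute)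
  then have col: "(\<Sum>s<n. cnj (H s (r div q)) * H s (c div q)) = (if r div q = c div q then 1 else 0)"
    using H unfolding unitary_mat_def by blast
  have "(\<Sum>m<n * q. cnj (tensor_id q H m r) * tensor_id q H m c)
      = (\<Sum>s<n. \<Sum>u<q. cnj (tensor_id q H (s * q + u) r) * tensor_id q H (s * q + u) c)"
    by (rule sum_lessThan_mult_nat)
  also have "\<dots> = (\<Sum>s<n. \<Sum>u<q. if u = r mod q \<and> r mod q = c mod q
                                     then cnj (H s (r div q)) * H s (c div q) else 0)"
    by (intro sum.cong refl) (auto simp: tensor_id_def)
  also have "\<dots> = (if r mod q = c mod q then \<Sum>s<n. cnj (H s (r div q)) * H s (c div q) else 0)"
    using q by (simp add: if_distrib[symmetric] sum.If_cases)
  also have "\<dots> = (if r = c then 1 else 0)"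
    unfolding col by (metis div_mult_mod_eq)
  finally show "(\<Sum>m<n * q. cnj (tensor_id q H m r) * tensor_id q H m c) = (if r = c then 1 else 0)" .
qed

section \<open>Basis states\<close>

lemma horner_sum_id_less:
  "(\<forall>e\<in>set xs. e < B) \<Longrightarrow> horner_sum id B xs < (B::nat) ^ length xs"
proof (induction xs)
  case (Cons a xs)
  then have "horner_sum id B xs + 1 \<le> B ^ length xs" "a < B"
    by (auto simp: id_def)
  then have "a + B * horner_sum id B xs < B * (horner_sum id B xs + 1)"
    by simp
  also have "\<dots> \<le> B * B ^ length xs"
    using \<open>horner_sum id B xs + 1 \<le> B ^ length xs\<close> by (rule mult_le_mono2)
  finally show ?case
    by (simp add: id_def)
qed simp

lemma horner_sum_id_inj:
  assumes "length xs = length ys" "\<forall>e\<in>set xs. e < B" "\<forall>e\<in>set ys. e < B"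
    "horner_sum id B xs = horner_sum id (B::nat) ys"
  shows "xs = ys"
  using assms
proof (induction xs arbitrary: ys)
  case (Cons a xs)
  then obtain b ys' where ys: "ys = b # ys'"
    by (cases ys) auto
  have eq: "a + B * horner_sum id B xs = b + B * horner_sum id B ys'" and "a < B" "b < B"
    using Cons.prems ys by (auto simp: id_def)
  then have "(a + B * horner_sum id B xs) mod B = (b + B * horner_sum id B ys') mod B"
    by simp
  with \<open>a < B\<close> \<open>b < B\<close> have "a = b"
    by simp
  with eq \<open>a < B\<close> have "horner_sum id B xs = horner_sum id B ys'"
    by simp
  with Cons ys \<open>a = b\<close> show ?case
    by auto
qed simp

lemma basis_idx_mod_div:
  assumes "z < W"
  shows "basis_idx W i b z mod W = z" "basis_idx W i b z div W = 2 * i + of_bool b"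
  using assms by (simp_all add: basis_idx_def)

lemma basis_idx_False_mod_div:
  assumes "z < W"
  shows "basis_idx W i False z mod (2 * W) = z" "basis_idx W i False z div (2 * W) = i"
proof -
  have "basis_idx W i False z = z + (2 * W) * i"
    by (simp add: basis_idx_def algebra_simps)
  then show "basis_idx W i False z mod (2 * W) = z" "basis_idx W i False z div (2 * W) = i"
    using assms by simp_all
qed

lemma basis_idx_inj:
  assumes "z < W" "z' < W" "basis_idx W i b z = basis_idx W i' b' z'"
  shows "i = i' \<and> b = b' \<and> z = z'"
proof -
  have "z = z'" "2 * i + of_bool b = 2 * i' + (of_bool b' :: nat)"
    using basis_idx_mod_div[OF assms(1)] basis_idx_mod_div[OF assms(2)] assms(3) by metis+
  then show ?thesis
    by (cases b; cases b'; simp; presburger)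
qed

lemma basis_idx_less:
  assumes "i < n" "z < W"
  shows "basis_idx W i b z < 2 * n * W"
proof -
  have "basis_idx W i b z < (2 * i + of_bool b + 1) * W"
    using assms(2) by (simp add: basis_idx_def algebra_simps)
  also have "\<dots> \<le> (2 * n) * W"
    using assms(1) by (intro mult_right_mono) (cases b, auto)
  finally show ?thesis .
qed

lemma oracle_target_basis_idx:
  assumes "z < W"
  shows "oracle_target W x (basis_idx W i b z) = basis_idx W i (b \<noteq> x i) z"
proof -
  have "odd (2 * i + of_bool b :: nat) = b" "(2 * i + of_bool b :: nat) div 2 = i"
    by (cases b; simp)+
  then show ?thesis
    unfolding oracle_target_def Let_def basis_idx_mod_div[OF assms] by simp
qed

lemma oracle_mat_monomial: "oracle_mat W x = monomial_mat (oracle_target W x) (\<lambda>_. 1)"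
  by (simp add: oracle_mat_def monomial_mat_def fun_eq_iff)

section \<open>The tester\<close>

lemma hdist_le: "hdist n x y \<le> n"
  unfolding hdist_def by (rule order_trans[OF card_mono[of "{..<n}"]]) auto

lemma hadamard_in_P_A: "s \<in> A \<Longrightarrow> hadamard k s \<in> P_A k A"
  by (auto simp: P_A_def)

lemma one_minus_power_le_exp: "(\<epsilon>::real) \<le> 1 \<Longrightarrow> (1 - \<epsilon>) ^ m \<le> exp (- \<epsilon> * real m)"
proof -
  assume "\<epsilon> \<le> 1"
  then have "(1 - \<epsilon>) ^ m \<le> exp (- \<epsilon>) ^ m"
    using exp_ge_add_one_self[of "- \<epsilon>"] by (intro power_mono) auto
  then show ?thesis
    by (simp add: exp_of_nat_mult[symmetric] mult.commute)
qed

locale hadamard_tester =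
  fixes k m :: nat
  assumes m_pos: "0 < m"
begin

abbreviation "n \<equiv> (2::nat) ^ k"
definition "B = 2 * n"
definition "W = B ^ Suc m"
definition "D = 2 * n * W"

definition workspace :: "nat \<Rightarrow> nat list \<Rightarrow> nat" where
  "workspace t zs = horner_sum id B (t # zs)"

definition "digit_lists = {zs. set zs \<subseteq> {..<B} \<and> length zs = m}"
definition "samples = {rs. set rs \<subseteq> {..<n} \<and> length rs = m}"
definition "L = {..<n} \<times> samples"

definition answer :: "(nat \<Rightarrow> bool) \<Rightarrow> nat \<Rightarrow> nat" where
  "answer x r = r + n * of_bool (x r)"

definition transcript :: "(nat \<Rightarrow> bool) \<Rightarrow> nat \<Rightarrow> nat list \<Rightarrow> nat list" where
  "transcript x j rs = map (\<lambda>q. if q < j then answer x (rs ! q) else rs ! q) [0..<m]"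

text \<open>The basis state reached after \<open>j\<close> queries from the branch \<open>(t, rs)\<close>: the workspace holds
  \<open>t\<close> and the samples \<open>rs\<close>, the first \<open>j\<close> of them replaced by their answers; the query register
  holds the next sample, and after the last one it holds \<open>t\<close>.\<close>
definition state_idx :: "(nat \<Rightarrow> bool) \<Rightarrow> nat \<Rightarrow> nat \<times> nat list \<Rightarrow> nat" where
  "state_idx x j = (\<lambda>(t, rs). if j < m then basis_idx W (rs ! j) False (workspace t (transcript x j rs))
                             else basis_idx W t False (workspace 0 (transcript x j rs)))"

lemma W_pos: "0 < W"
  by (simp add: W_def B_def)

lemma B_pos: "0 < B"
  by (simp add: B_def)

lemma less_B: "r < n \<Longrightarrow> r < B"
  by (simp add: B_def)

lemma D_pos: "0 < D"
  using W_pos by (simp add: D_def)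

lemma finite_samples: "finite samples"
  unfolding samples_def by (simp add: finite_lists_length_eq)

lemma finite_L: "finite L"
  unfolding L_def using finite_samples by simp

lemma card_L: "card L = n ^ Suc m"
  unfolding L_def samples_def
  by (simp add: card_cartesian_product card_lists_length_eq)

lemma samples_nth: "rs \<in> samples \<Longrightarrow> q < m \<Longrightarrow> rs ! q < n"
  unfolding samples_def by (auto dest!: nth_mem)

lemma workspace_less: "t < B \<Longrightarrow> zs \<in> digit_lists \<Longrightarrow> workspace t zs < W"
  unfolding workspace_def W_def digit_lists_def
  using horner_sum_id_less[of "t # zs" B] by auto

lemma workspace_inj:
  assumes "t < B" "t' < B" "zs \<in> digit_lists" "zs' \<in> digit_lists" "workspace t zs = workspace t' zs'"
  shows "t = t' \<and> zs = zs'"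
  using horner_sum_id_inj[of "t # zs" "t' # zs'" B] assms
  unfolding workspace_def digit_lists_def by auto

lemma basis_workspace_inj:
  assumes "t < B" "t' < B" "zs \<in> digit_lists" "zs' \<in> digit_lists"
    and "basis_idx W i b (workspace t zs) = basis_idx W i' b' (workspace t' zs')"
  shows "i = i' \<and> b = b' \<and> t = t' \<and> zs = zs'"
proof -
  have "i = i' \<and> b = b' \<and> workspace t zs = workspace t' zs'"
    using basis_idx_inj[OF workspace_less workspace_less] assms by blast
  then show ?thesis
    using workspace_inj assms by blast
qed

lemma basis_workspace_less: "i < n \<Longrightarrow> t < B \<Longrightarrow> zs \<in> digit_lists \<Longrightarrow>
    basis_idx W i b (workspace t zs) < D"
  unfolding D_def by (intro basis_idx_less workspace_less)

lemma answer_less: "r < n \<Longrightarrow> answer x r < B"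
  unfolding answer_def B_def by (cases "x r") auto

lemma answer_inj: "r < n \<Longrightarrow> r' < n \<Longrightarrow> answer x r = answer y r' \<Longrightarrow> r = r' \<and> x r = y r"
  unfolding answer_def by (cases "x r"; cases "y r'"; simp; presburger)

lemma length_transcript [simp]: "length (transcript x j rs) = m"
  by (simp add: transcript_def)

lemma transcript_nth: "q < m \<Longrightarrow> transcript x j rs ! q = (if q < j then answer x (rs ! q) else rs ! q)"
  by (simp add: transcript_def)

lemma transcript_digits: "rs \<in> samples \<Longrightarrow> transcript x j rs \<in> digit_lists"
  using samples_nth answer_less
  by (fastforce simp: digit_lists_def transcript_def B_def)

lemma transcript_eq_iff:
  assumes "rs \<in> samples" "rs' \<in> samples"
  shows "transcript x j rs = transcript y j rs' \<longleftrightarrow> rs = rs' \<and> (\<forall>q<min j m. x (rs ! q) = y (rs ! q))"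
proof
  assume eq: "transcript x j rs = transcript y j rs'"
  have nth: "rs ! q = rs' ! q \<and> (q < j \<longrightarrow> x (rs ! q) = y (rs ! q))" if "q < m" for q
  proof -
    have "transcript x j rs ! q = transcript y j rs' ! q"
      using eq by simp
    then show ?thesis
      using answer_inj[OF samples_nth samples_nth, OF assms(1) that assms(2) that] that
      by (cases "q < j") (simp_all add: transcript_nth)
  qed
  moreover have "length rs = m" "length rs' = m"
    using assms by (simp_all add: samples_def)
  ultimately have "rs = rs'"
    by (metis nth_equalityI)
  with nth show "rs = rs' \<and> (\<forall>q<min j m. x (rs ! q) = y (rs ! q))"
    by simp
qed (auto simp: transcript_def answer_def)

lemma state_idx_less:
  assumes "l \<in> L"
  shows "state_idx x j l < D"
proof -
  obtain t rs where l: "l = (t, rs)" "t < n" "rs \<in> samples"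
    using assms by (auto simp: L_def)
  have "t < B" "0 < B"
    using l by (auto simp: B_def)
  then show ?thesis
    using basis_workspace_less[OF samples_nth[OF l(3)]] basis_workspace_less[OF l(2)]
      transcript_digits[OF l(3)] l(1)
    by (simp add: state_idx_def)
qed

lemma state_idx_inj: "inj_on (state_idx x j) L"
proof (rule inj_onI)
  fix l l' assume "l \<in> L" "l' \<in> L" and eq: "state_idx x j l = state_idx x j l'"
  then obtain t rs t' rs' where l: "l = (t, rs)" "t < n" "rs \<in> samples"
    and l': "l' = (t', rs')" "t' < n" "rs' \<in> samples"
    by (auto simp: L_def)
  have "t < B" "t' < B" "0 < B"
    using l l' by (auto simp: B_def)
  note inj = basis_workspace_inj[OF _ _ transcript_digits[OF l(3)] transcript_digits[OF l'(3)]]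
  have "t = t' \<and> transcript x j rs = transcript x j rs'"
  proof (cases "j < m")
    case True
    then show ?thesis
      using inj[OF \<open>t < B\<close> \<open>t' < B\<close>] eq l(1) l'(1) by (simp add: state_idx_def)
  next
    case False
    then show ?thesis
      using inj[OF \<open>0 < B\<close> \<open>0 < B\<close>] eq l(1) l'(1) by (simp add: state_idx_def)
  qed
  then show "l = l'"
    using transcript_eq_iff[OF l(3) l'(3)] l l' by auto
qed

text \<open>\<open>record_perm j\<close> must not depend on \<open>x\<close>, so it is prescribed on every basis state that can
  follow the \<open>j\<close>-th query, for every oracle string.\<close>
definition query_dom :: "nat \<Rightarrow> (nat \<times> bool \<times> nat \<times> nat list) set" where
  "query_dom j = {(i, b, t, zs). t < n \<and> zs \<in> digit_lists \<and>
                                 (\<forall>q. j \<le> q \<and> q < m \<longrightarrow> zs ! q < n) \<and> i = zs ! j}"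

definition query_idx :: "nat \<times> bool \<times> nat \<times> nat list \<Rightarrow> nat" where
  "query_idx = (\<lambda>(i, b, t, zs). basis_idx W i b (workspace t zs))"

text \<open>Storing the query \<open>i\<close> together with its answer \<open>b\<close>, as the digit \<open>i + n b\<close>, keeps this map
  injective.\<close>
definition stored_idx :: "nat \<Rightarrow> nat \<times> bool \<times> nat \<times> nat list \<Rightarrow> nat" where
  "stored_idx j = (\<lambda>(i, b, t, zs).
     if Suc j < m then basis_idx W (zs ! Suc j) False (workspace t (zs[j := i + n * of_bool b]))
     else basis_idx W t False (workspace 0 (zs[j := i + n * of_bool b])))"

lemma update_digits:
  "i < n \<Longrightarrow> zs \<in> digit_lists \<Longrightarrow> zs[j := i + n * of_bool b] \<in> digit_lists"
  unfolding digit_lists_def B_def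
  by (cases b) (auto dest: subsetD[OF set_update_subset_insert])

lemma update_inj:
  assumes "i < n" "i' < n" "j < length zs" "length zs' = length zs" "zs ! j = i" "zs' ! j = i'"
    and eq: "zs[j := i + n * of_bool b] = zs'[j := i' + n * of_bool b']"
  shows "i = i' \<and> b = b' \<and> zs = zs'"
proof -
  have "i + n * of_bool b = i' + n * of_bool b'"
    using arg_cong[OF eq, of "\<lambda>zs. zs ! j"] assms(3,4) by simp
  then have "i = i' \<and> b = b'"
    using assms(1,2) by (cases b; cases b'; simp)
  moreover have "zs ! q = zs' ! q" if "q < length zs" for q
    using arg_cong[OF eq, of "\<lambda>zs. zs ! q"] assms(5,6) calculation by (cases "q = j") auto
  ultimately show ?thesis
    using assms(4) by (metis nth_equalityI)
qed

lemma query_dom_D: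
  assumes "(i, b, t, zs) \<in> query_dom j" "j < m"
  shows "i < n" "t < n" "zs \<in> digit_lists" "length zs = m" "zs ! j = i"
    "Suc j < m \<Longrightarrow> zs ! Suc j < n"
  using assms by (auto simp: query_dom_def digit_lists_def B_def)

lemma query_idx_less: "\<rho> \<in> query_dom j \<Longrightarrow> j < m \<Longrightarrow> query_idx \<rho> < D"
  by (cases \<rho>) (auto simp: query_idx_def dest: query_dom_D intro!: basis_workspace_less less_B)

lemma stored_idx_less:
  assumes "\<rho> \<in> query_dom j" "j < m"
  shows "stored_idx j \<rho> < D"
proof -
  obtain i b t zs where \<rho>: "\<rho> = (i, b, t, zs)"
    by (cases \<rho>)
  note facts = query_dom_D[OF assms(1)[unfolded \<rho>] assms(2)]
  have "zs[j := i + n * of_bool b] \<in> digit_lists"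
    using update_digits facts by blast
  then show ?thesis
    using basis_workspace_less[OF facts(6) less_B[OF facts(2)]] basis_workspace_less[OF facts(2) B_pos]
    by (simp add: \<rho> stored_idx_def)
qed

lemma inj_query_idx: "j < m \<Longrightarrow> inj_on query_idx (query_dom j)"
proof (rule inj_onI)
  fix \<rho> \<rho>' assume j: "j < m" and "\<rho> \<in> query_dom j" "\<rho>' \<in> query_dom j"
    and eq: "query_idx \<rho> = query_idx \<rho>'"
  then obtain i b t zs i' b' t' zs' where \<rho>: "\<rho> = (i, b, t, zs)" "\<rho>' = (i', b', t', zs')"
    and dom: "(i, b, t, zs) \<in> query_dom j" "(i', b', t', zs') \<in> query_dom j"
    by (metis prod_cases4)
  note facts = query_dom_D[OF dom(1) j] query_dom_D[OF dom(2) j]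
  have "basis_idx W i b (workspace t zs) = basis_idx W i' b' (workspace t' zs')"
    using eq by (simp add: \<rho> query_idx_def)
  then show "\<rho> = \<rho>'"
    using basis_workspace_inj[OF less_B[OF facts(2)] less_B[OF facts(8)] facts(3) facts(9)]
    by (simp add: \<rho>)
qed

lemma inj_stored_idx: "j < m \<Longrightarrow> inj_on (stored_idx j) (query_dom j)"
proof (rule inj_onI)
  fix \<rho> \<rho>' assume j: "j < m" and "\<rho> \<in> query_dom j" "\<rho>' \<in> query_dom j"
    and eq: "stored_idx j \<rho> = stored_idx j \<rho>'"
  then obtain i b t zs i' b' t' zs' where \<rho>: "\<rho> = (i, b, t, zs)" "\<rho>' = (i', b', t', zs')"
    and dom: "(i, b, t, zs) \<in> query_dom j" "(i', b', t', zs') \<in> query_dom j"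
    by (metis prod_cases4)
  note facts = query_dom_D[OF dom(1) j] query_dom_D[OF dom(2) j]
  define u where "u = zs[j := i + n * of_bool b]"
  define u' where "u' = zs'[j := i' + n * of_bool b']"
  have u: "u \<in> digit_lists" "u' \<in> digit_lists"
    unfolding u_def u'_def using update_digits facts by blast+
  have "t = t' \<and> u = u'"
  proof (cases "Suc j < m")
    case True
    then have "basis_idx W (zs ! Suc j) False (workspace t u)
        = basis_idx W (zs' ! Suc j) False (workspace t' u')"
      using eq by (simp add: \<rho> stored_idx_def u_def u'_def)
    then show ?thesis
      using basis_workspace_inj[OF less_B[OF facts(2)] less_B[OF facts(8)] u] by simp
  next
    case False
    then have "basis_idx W t False (workspace 0 u) = basis_idx W t' False (workspace 0 u')"
      using eq by (simp add: \<rho> stored_idx_def u_def u'_def)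
    then show ?thesis
      using basis_workspace_inj[OF B_pos B_pos u] by simp
  qed
  moreover have "i = i' \<and> b = b' \<and> zs = zs'"
    using calculation update_inj[of i i' j zs zs' b b'] facts j by (simp add: u_def u'_def)
  ultimately show "\<rho> = \<rho>'"
    by (simp add: \<rho>)
qed

definition record_perm :: "nat \<Rightarrow> nat \<Rightarrow> nat" where
  "record_perm j = (SOME f. bij_betw f {..<D} {..<D} \<and>
                            (\<forall>\<rho>\<in>query_dom j. f (query_idx \<rho>) = stored_idx j \<rho>))"

lemma record_perm:
  assumes "j < m"
  shows "bij_betw (record_perm j) {..<D} {..<D}"
    "\<rho> \<in> query_dom j \<Longrightarrow> record_perm j (query_idx \<rho>) = stored_idx j \<rho>"
proof -
  have "\<exists>f. bij_betw f {..<D} {..<D} \<and> (\<forall>\<rho>\<in>query_dom j. f (query_idx \<rho>) = stored_idx j \<rho>)"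
    using assms query_idx_less stored_idx_less
    by (intro ex_permutation_mapping inj_query_idx inj_stored_idx) auto
  from someI_ex[OF this]
  show "bij_betw (record_perm j) {..<D} {..<D}"
    "\<rho> \<in> query_dom j \<Longrightarrow> record_perm j (query_idx \<rho>) = stored_idx j \<rho>"
    unfolding record_perm_def by auto
qed

definition U_record :: "nat \<Rightarrow> cmatrix" where
  "U_record j = monomial_mat (record_perm j) (\<lambda>_. 1)"

lemma unitary_U_record: "j < m \<Longrightarrow> unitary_mat D (U_record j)"
  unfolding U_record_def by (rule unitary_monomial_mat) (auto simp: record_perm)

lemma query_after_state_idx:
  fixes x :: "nat \<Rightarrow> bool"
  assumes "j < m" "(t, rs) \<in> L"
  defines "\<rho> \<equiv> (rs ! j, x (rs ! j), t, transcript x j rs)"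
  shows "\<rho> \<in> query_dom j" "oracle_target W x (state_idx x j (t, rs)) = query_idx \<rho>"
    "stored_idx j \<rho> = state_idx x (Suc j) (t, rs)"
proof -
  have t: "t < n" and rs: "rs \<in> samples"
    using assms by (auto simp: L_def)
  show "\<rho> \<in> query_dom j"
    using assms(1) t transcript_digits[OF rs] samples_nth[OF rs]
    by (auto simp: \<rho>_def query_dom_def transcript_nth)
  show "oracle_target W x (state_idx x j (t, rs)) = query_idx \<rho>"
    using assms(1) oracle_target_basis_idx[OF workspace_less[OF _ transcript_digits[OF rs]]] t
    by (simp add: \<rho>_def state_idx_def query_idx_def B_def)
  have "(transcript x j rs)[j := rs ! j + n * of_bool (x (rs ! j))] = transcript x (Suc j) rs"
    using assms(1) by (intro nth_equalityI) (auto simp: transcript_nth nth_list_update answer_def)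
  then show "stored_idx j \<rho> = state_idx x (Suc j) (t, rs)"
    by (simp add: \<rho>_def stored_idx_def state_idx_def transcript_nth)
qed

lemma record_step:
  assumes "j < m"
  shows "mat_app D (U_record j) (mat_app D (oracle_mat W x) (superpos L a (state_idx x j)))
    = superpos L a (state_idx x (Suc j))"
proof -
  have queried: "oracle_target W x (state_idx x j l) < D"
    and stored: "record_perm j (oracle_target W x (state_idx x j l)) = state_idx x (Suc j) l"
    if "l \<in> L" for l
    using that query_after_state_idx[OF assms] query_idx_less[OF _ assms] record_perm(2)[OF assms]
    by (cases l; metis)+
  have "mat_app D (U_record j) (mat_app D (oracle_mat W x) (superpos L a (state_idx x j)))
      = superpos L a (\<lambda>l. record_perm j (oracle_target W x (state_idx x j l)))"
    unfolding oracle_mat_monomial U_record_def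
    using queried stored state_idx_less
    by (simp add: mat_app_monomial_superpos finite_L)
  also have "\<dots> = superpos L a (state_idx x (Suc j))"
    by (rule superpos_cong) (simp_all add: stored)
  finally show ?thesis .
qed

definition "amp0 = 1 / sqrt (real n ^ Suc m)"

definition U_init :: cmatrix where
  "U_init = (SOME U. unitary_mat D U \<and>
     (\<forall>r<D. U r 0 = complex_of_real (superpos L (\<lambda>_. amp0) (state_idx (\<lambda>_. False) 0) r)))"

lemma state_idx_0: "state_idx x 0 = state_idx y 0"
  using m_pos by (auto simp: state_idx_def transcript_def)

lemma U_init:
  "unitary_mat D U_init"
  "r < D \<Longrightarrow> U_init r 0 = complex_of_real (superpos L (\<lambda>_. amp0) (state_idx (\<lambda>_. False) 0) r)"
proof -
  have "(\<Sum>r<D. (superpos L (\<lambda>_. amp0) (state_idx (\<lambda>_. False) 0) r)\<^sup>2) = real (card L) * amp0\<^sup>2"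
    using state_idx_less by (subst sum_superpos[OF finite_L state_idx_inj]) auto
  also have "\<dots> = 1"
    by (simp add: card_L amp0_def power_divide)
  finally have "\<exists>U. unitary_mat D U \<and>
      (\<forall>r<D. U r 0 = complex_of_real (superpos L (\<lambda>_. amp0) (state_idx (\<lambda>_. False) 0) r))"
    by (rule ex_unitary_first_column[OF D_pos])
  from someI_ex[OF this]
  show "unitary_mat D U_init"
    "r < D \<Longrightarrow> U_init r 0 = complex_of_real (superpos L (\<lambda>_. amp0) (state_idx (\<lambda>_. False) 0) r)"
    unfolding U_init_def by auto
qed

lemma initial_state:
  "mat_app D U_init (\<lambda>r. if r = 0 then 1 else 0) = superpos L (\<lambda>_. complex_of_real amp0) (state_idx x 0)"
proof
  fix r
  show "mat_app D U_init (\<lambda>r. if r = 0 then 1 else 0) r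
      = superpos L (\<lambda>_. complex_of_real amp0) (state_idx x 0) r"
  proof (cases "r < D")
    case True
    then have "mat_app D U_init (\<lambda>r. if r = 0 then 1 else 0) r = U_init r 0"
      using D_pos by (simp add: mat_app_def if_distrib[of "(*) _"] cong: if_cong)
    then show ?thesis
      using True by (auto simp: U_init superpos_def state_idx_0[of "\<lambda>_. False" x] intro!: sum.cong)
  next
    case False
    then have "r \<notin> state_idx x 0 ` L"
      using state_idx_less by force
    then show ?thesis
      using False by (simp add: mat_app_def superpos_outside)
  qed
qed

definition "U_phase = monomial_mat id (\<lambda>c. if odd (c div W) then -1 else 1)"

lemma unitary_U_phase: "unitary_mat D U_phase"
  unfolding U_phase_def by (rule unitary_monomial_mat) auto

definition sign :: "(nat \<Rightarrow> bool) \<Rightarrow> nat \<Rightarrow> real" where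
  "sign x t = (if x t then -1 else 1)"

lemma oracle_state_idx_last:
  fixes x :: "nat \<Rightarrow> bool"
  assumes "(t, rs) \<in> L"
  defines "z \<equiv> workspace 0 (transcript x m rs)"
  shows "oracle_target W x (state_idx x m (t, rs)) = basis_idx W t (x t) z"
    "oracle_target W x (basis_idx W t (x t) z) = state_idx x m (t, rs)"
    "basis_idx W t (x t) z < D"
    "(if odd (basis_idx W t (x t) z div W) then -1 else 1) = complex_of_real (sign x t)"
proof -
  have t: "t < n" and z: "z < W"
    using assms transcript_digits workspace_less[OF B_pos] by (auto simp: L_def)
  show "oracle_target W x (state_idx x m (t, rs)) = basis_idx W t (x t) z"
    "oracle_target W x (basis_idx W t (x t) z) = state_idx x m (t, rs)"
    using oracle_target_basis_idx[OF z] by (simp_all add: state_idx_def z_def)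
  show "basis_idx W t (x t) z < D"
    unfolding D_def using basis_idx_less[OF t z] .
  show "(if odd (basis_idx W t (x t) z div W) then -1 else 1) = complex_of_real (sign x t)"
    using basis_idx_mod_div(2)[OF z] by (simp add: sign_def)
qed

text \<open>Phase kickback: querying, flipping the sign of the oracle bit, and querying again multiplies
  the amplitude of each branch by \<open>(-1)^(x t)\<close>.\<close>
lemma phase_step:
  "mat_app D (oracle_mat W x) (mat_app D U_phase (mat_app D (oracle_mat W x) (superpos L a (state_idx x m))))
   = superpos L (\<lambda>(t, rs). complex_of_real (sign x t) * a (t, rs)) (state_idx x m)"
proof -
  let ?q = "\<lambda>l. oracle_target W x (state_idx x m l)"
  have q: "?q l < D" "oracle_target W x (?q l) = state_idx x m l"
    "(if odd (?q l div W) then -1 else 1) = complex_of_real (sign x (fst l))" if "l \<in> L" for l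
    using oracle_state_idx_last that by (cases l; simp)+
  have "mat_app D (oracle_mat W x) (mat_app D U_phase (mat_app D (oracle_mat W x) (superpos L a (state_idx x m))))
      = superpos L (\<lambda>l. (if odd (?q l div W) then -1 else 1) * a l) (\<lambda>l. oracle_target W x (?q l))"
    unfolding oracle_mat_monomial U_phase_def using state_idx_less q
    by (simp add: mat_app_monomial_superpos finite_L)
  also have "\<dots> = superpos L (\<lambda>(t, rs). complex_of_real (sign x t) * a (t, rs)) (state_idx x m)"
    by (rule superpos_cong) (auto simp: q)
  finally show ?thesis .
qed

definition hadamard_mat :: cmatrix where
  "hadamard_mat = (\<lambda>s t. complex_of_real (walsh k s t / sqrt n))"

lemma unitary_hadamard_mat: "unitary_mat n hadamard_mat"
  unfolding unitary_mat_def
proof (intro allI impI)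
  fix r c assume "r < n" "c < n"
  have "cnj (hadamard_mat s r) * hadamard_mat s c = complex_of_real (walsh k r s * walsh k c s / n)" for s
    by (simp add: hadamard_mat_def walsh_commute[of k s] flip: of_real_mult)
  then have "(\<Sum>s<n. cnj (hadamard_mat s r) * hadamard_mat s c)
      = complex_of_real ((\<Sum>s<n. walsh k r s * walsh k c s) / n)"
    by (simp add: sum_divide_distrib)
  also have "\<dots> = (if r = c then 1 else 0)"
    using walsh_orthogonal[OF \<open>r < n\<close> \<open>c < n\<close>] by simp
  finally show "(\<Sum>s<n. cnj (hadamard_mat s r) * hadamard_mat s c) = (if r = c then 1 else 0)" .
qed

definition "U_hadamard = tensor_id (2 * W) hadamard_mat"

lemma unitary_U_hadamard: "unitary_mat D U_hadamard"
proof -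
  have "D = n * (2 * W)"
    by (simp add: D_def)
  then show ?thesis
    using unitary_tensor_id[OF unitary_hadamard_mat, of "2 * W"] W_pos by (simp add: U_hadamard_def)
qed

definition "Us = map U_record [0..<m] @ [U_phase, U_hadamard]"

lemma unitary_Us: "U \<in> set Us \<Longrightarrow> unitary_mat D U"
  using unitary_U_record unitary_U_phase unitary_U_hadamard by (auto simp: Us_def)

lemma length_Us: "length Us = m + 2"
  by (simp add: Us_def)

lemma record_steps:
  "j \<le> m \<Longrightarrow> foldl (\<lambda>v U. mat_app D U (mat_app D (oracle_mat W x) v))
                 (superpos L a (state_idx x 0)) (map U_record [0..<j])
              = superpos L a (state_idx x j)"
  by (induction j) (simp_all add: record_step)

lemma final_state_eq:
  "final_state n W x U_init Us
   = mat_app D U_hadamard (superpos L (\<lambda>(t, rs). complex_of_real (sign x t * amp0)) (state_idx x m))"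
  unfolding final_state_def Let_def D_def[symmetric] initial_state[of x] Us_def
  using phase_step[of x "\<lambda>_. complex_of_real amp0"]
  by (simp add: record_steps case_prod_unfold)

definition walsh_coeff :: "(nat \<Rightarrow> bool) \<Rightarrow> nat \<Rightarrow> real" where
  "walsh_coeff x s = (\<Sum>t<n. sign x t * walsh k s t)"

definition agrees :: "(nat \<Rightarrow> bool) \<Rightarrow> nat \<Rightarrow> nat list \<Rightarrow> bool" where
  "agrees x s rs \<longleftrightarrow> (\<forall>q<m. hadamard k s (rs ! q) = x (rs ! q))"

lemma U_hadamard_entry:
  assumes "s < n" "rs0 \<in> samples" "(t, rs) \<in> L"
  shows "U_hadamard (state_idx (hadamard k s) m (s, rs0)) (state_idx x m (t, rs))
    = (if rs = rs0 \<and> agrees x s rs0 then hadamard_mat s t else 0)"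
proof -
  have rs: "rs \<in> samples"
    using assms by (simp add: L_def)
  note z = workspace_less[OF B_pos transcript_digits]
  have "workspace 0 (transcript (hadamard k s) m rs0) = workspace 0 (transcript x m rs)
      \<longleftrightarrow> rs = rs0 \<and> agrees x s rs0"
    using workspace_inj[OF B_pos B_pos transcript_digits transcript_digits, OF assms(2) rs]
      transcript_eq_iff[OF assms(2) rs, of "hadamard k s" m x]
    by (auto simp: agrees_def)
  then show ?thesis
    by (simp add: state_idx_def U_hadamard_def tensor_id_def basis_idx_False_mod_div[OF z(1)[OF assms(2)]]
        basis_idx_False_mod_div[OF z(1)[OF rs]])
qed

lemma final_amplitude:
  assumes "s < n" "rs0 \<in> samples"
  shows "final_state n W x U_init Us (state_idx (hadamard k s) m (s, rs0))
    = (if agrees x s rs0 then complex_of_real (amp0 * walsh_coeff x s / sqrt n) else 0)"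
proof -
  have "(s, rs0) \<in> L"
    using assms by (simp add: L_def)
  then have "final_state n W x U_init Us (state_idx (hadamard k s) m (s, rs0))
     = (\<Sum>l\<in>L. complex_of_real (sign x (fst l) * amp0) *
          U_hadamard (state_idx (hadamard k s) m (s, rs0)) (state_idx x m l))"
    unfolding final_state_eq
    by (simp add: mat_app_superpos[OF finite_L state_idx_less] state_idx_less case_prod_unfold)
  also have "\<dots> = (\<Sum>(t, rs)\<in>{..<n} \<times> samples. complex_of_real (sign x t * amp0) *
          (if rs = rs0 \<and> agrees x s rs0 then hadamard_mat s t else 0))"
    unfolding L_def by (rule sum.cong) (auto simp: U_hadamard_entry[OF assms] L_def)
  also have "\<dots> = (if agrees x s rs0 then \<Sum>t<n. complex_of_real (sign x t * amp0) * hadamard_mat s t else 0)"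
    using assms(2) finite_samples
    by (simp add: sum.cartesian_product[symmetric] if_distrib[of "(*) _"] sum.If_cases Int_absorb1
        cong: if_cong)
  also have "\<dots> = (if agrees x s rs0 then complex_of_real (amp0 * walsh_coeff x s / sqrt n) else 0)"
    by (simp add: walsh_coeff_def hadamard_mat_def sum_distrib_left sum_divide_distrib algebra_simps)
  finally show ?thesis .
qed

definition accepting :: "nat set \<Rightarrow> nat set" where
  "accepting A = (\<lambda>(s, rs). state_idx (hadamard k s) m (s, rs)) ` (A \<times> samples)"

definition agreement :: "(nat \<Rightarrow> bool) \<Rightarrow> nat \<Rightarrow> nat set" where
  "agreement x s = {r. r < n \<and> x r = hadamard k s r}"

lemma inj_accepting: "inj_on (\<lambda>(s, rs). state_idx (hadamard k s) m (s, rs)) (A \<times> samples)"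
proof (rule inj_onI, clarsimp)
  fix s rs s' rs'
  assume rs: "rs \<in> samples" "rs' \<in> samples"
    and eq: "state_idx (hadamard k s) m (s, rs) = state_idx (hadamard k s') m (s', rs')"
  then have "basis_idx W s False (workspace 0 (transcript (hadamard k s) m rs))
      = basis_idx W s' False (workspace 0 (transcript (hadamard k s') m rs'))"
    by (simp add: state_idx_def)
  then have "s = s' \<and> transcript (hadamard k s) m rs = transcript (hadamard k s') m rs'"
    using basis_workspace_inj[OF B_pos B_pos transcript_digits[OF rs(1)] transcript_digits[OF rs(2)]]
    by blast
  then show "s = s' \<and> rs = rs'"
    using transcript_eq_iff[OF rs] by auto
qed

lemma card_agrees: "card {rs \<in> samples. agrees x s rs} = card (agreement x s) ^ m"
proof -
  have "{rs \<in> samples. agrees x s rs} = {rs. set rs \<subseteq> agreement x s \<and> length rs = m}"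
    by (auto simp: samples_def agrees_def agreement_def in_set_conv_nth dest: subsetD[OF _ nth_mem])
  then show ?thesis
    by (simp add: card_lists_length_eq agreement_def)
qed

lemma accept_prob_eq:
  assumes "A \<subseteq> {..<n}"
  shows "accept_prob n W x U_init Us (accepting A)
    = (\<Sum>s\<in>A. (real (card (agreement x s)) / n) ^ m * (walsh_coeff x s / n)\<^sup>2)"
proof -
  have sq: "(amp0 * walsh_coeff x s / sqrt n)\<^sup>2 = (walsh_coeff x s)\<^sup>2 / n ^ (m + 2)" for s
    by (simp add: amp0_def power_divide power_mult_distrib)
  have amp: "(cmod (final_state n W x U_init Us (state_idx (hadamard k s) m (s, rs))))\<^sup>2
      = (if agrees x s rs then (walsh_coeff x s)\<^sup>2 / n ^ (m + 2) else 0)"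
    if "s \<in> A" "rs \<in> samples" for s rs
  proof -
    have "s < n"
      using that assms by auto
    then show ?thesis
      unfolding final_amplitude[OF \<open>s < n\<close> that(2)]
      by (simp only: if_distrib[of cmod] if_distrib[of power2] norm_of_real power2_abs sq) simp
  qed
  have "accept_prob n W x U_init Us (accepting A)
      = (\<Sum>s\<in>A. \<Sum>rs\<in>samples. if agrees x s rs then (walsh_coeff x s)\<^sup>2 / n ^ (m + 2) else 0)"
    unfolding accept_prob_def accepting_def
    by (auto simp: sum.reindex[OF inj_accepting] sum.cartesian_product amp intro!: sum.cong)
  also have "\<dots> = (\<Sum>s\<in>A. (real (card (agreement x s)) / n) ^ m * (walsh_coeff x s / n)\<^sup>2)"
    by (simp add: sum.inter_filter[OF finite_samples, symmetric] card_agrees power_divide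
        power_add power2_eq_square field_simps)
  finally show ?thesis .
qed

lemma accept_prob_member:
  assumes "A \<subseteq> {..<n}" "x \<in> P_A k A"
  shows "accept_prob n W x U_init Us (accepting A) = 1"
proof -
  obtain y where y: "y \<in> A" "\<forall>i<n. x i = hadamard k y i"
    using assms(2) by (auto simp: P_A_def)
  have "y < n"
    using y assms(1) by auto
  have "walsh_coeff x s = (if s = y then n else 0)" if "s \<in> A" for s
  proof -
    have "walsh_coeff x s = (\<Sum>t<n. walsh k y t * walsh k s t)"
      unfolding walsh_coeff_def using y by (intro sum.cong) (simp_all add: sign_def walsh_def hadamard_def)
    then show ?thesis
      using walsh_orthogonal[OF \<open>y < n\<close>, of s] that assms(1) by auto
  qed
  moreover have "agreement x y = {..<n}"
    using y by (auto simp: agreement_def)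
  ultimately have "accept_prob n W x U_init Us (accepting A) = (\<Sum>s\<in>A. if s = y then 1 else 0)"
    unfolding accept_prob_eq[OF assms(1)] by (intro sum.cong) auto
  also have "\<dots> = 1"
    using y(1) finite_subset[OF assms(1)] by simp
  finally show ?thesis .
qed

lemma card_agreement_far:
  fixes \<epsilon> :: real
  assumes "eps_far n \<epsilon> (P_A k A) x" "s \<in> A"
  shows "real (card (agreement x s)) < (1 - \<epsilon>) * n"
proof -
  have "{..<n} = agreement x s \<union> {i. i < n \<and> x i \<noteq> hadamard k s i}"
    "agreement x s \<inter> {i. i < n \<and> x i \<noteq> hadamard k s i} = {}"
    by (auto simp: agreement_def)
  then have "card (agreement x s) + hdist n x (hadamard k s) = n"
    unfolding hdist_def by (metis card_Un_disjoint card_lessThan finite_Un finite_lessThan)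
  then have "real (card (agreement x s)) + real (hdist n x (hadamard k s)) = n"
    using of_nat_add by metis
  moreover have "\<epsilon> * n < hdist n x (hadamard k s)"
    using assms hadamard_in_P_A by (auto simp: eps_far_def)
  ultimately show ?thesis
    unfolding left_diff_distrib by linarith
qed

lemma sum_walsh_coeff_sq: "(\<Sum>s<n. (walsh_coeff x s / n)\<^sup>2) = 1"
proof -
  have "(sign x t)\<^sup>2 = 1" for t
    by (simp add: sign_def)
  then have "(\<Sum>s<n. (walsh_coeff x s)\<^sup>2) = n * n"
    using walsh_parseval[where f = "sign x" and k = k] by (simp add: walsh_coeff_def)
  then show ?thesis
    by (simp add: power_divide power2_eq_square flip: sum_divide_distrib)
qed

lemma accept_prob_far:
  fixes \<epsilon> :: real
  assumes "A \<subseteq> {..<n}" "\<epsilon> \<le> 1" "eps_far n \<epsilon> (P_A k A) x"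
  shows "accept_prob n W x U_init Us (accepting A) \<le> (1 - \<epsilon>) ^ m"
proof -
  have "accept_prob n W x U_init Us (accepting A)
      = (\<Sum>s\<in>A. (real (card (agreement x s)) / n) ^ m * (walsh_coeff x s / n)\<^sup>2)"
    by (rule accept_prob_eq[OF assms(1)])
  also have "\<dots> \<le> (\<Sum>s\<in>A. (1 - \<epsilon>) ^ m * (walsh_coeff x s / n)\<^sup>2)"
    using card_agreement_far[OF assms(3)]
    by (intro sum_mono mult_right_mono power_mono) (auto simp: pos_divide_le_eq less_imp_le)
  also have "\<dots> \<le> (\<Sum>s<n. (1 - \<epsilon>) ^ m * (walsh_coeff x s / n)\<^sup>2)"
    using assms(1,2) by (intro sum_mono2) auto
  also have "\<dots> = (1 - \<epsilon>) ^ m"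
    unfolding sum_distrib_left[symmetric] sum_walsh_coeff_sq by simp
  finally show ?thesis .
qed

theorem one_sided_tester:
  fixes \<epsilon> :: real
  assumes "A \<subseteq> {..<n}" "\<epsilon> \<le> 1" "2 \<le> \<epsilon> * m"
  shows "one_sided_quantum_tester n (P_A k A) \<epsilon> (m + 2)"
  unfolding one_sided_quantum_tester_def
proof (intro exI conjI allI impI ballI)
  show "accepting A \<subseteq> {..<2 * n * W}"
    using assms(1) state_idx_less by (force simp: accepting_def L_def D_def)
  fix x
  show "x \<in> P_A k A \<Longrightarrow> accept_prob n W x U_init Us (accepting A) = 1"
    by (rule accept_prob_member[OF assms(1)])
  assume far: "eps_far n \<epsilon> (P_A k A) x"
  have "accept_prob n W x U_init Us (accepting A) \<le> exp (- \<epsilon> * m)"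
    using accept_prob_far[OF assms(1,2) far] one_minus_power_le_exp[OF assms(2)] by (rule order_trans)
  also have "\<dots> \<le> exp (- 2)"
    using assms(3) by simp
  also have "\<dots> \<le> 1 / 3"
    using exp_ge_add_one_self[of 2] by (simp add: exp_minus field_simps)
  finally show "accept_prob n W x U_init Us (accepting A) \<le> 1 / 3" .
qed (use W_pos length_Us U_init(1) unitary_Us in \<open>simp_all add: D_def\<close>)

end

lemma not_eps_far_ge_1:
  assumes "1 \<le> \<epsilon>" "y \<in> P"
  shows "\<not> eps_far n \<epsilon> P x"
proof -
  have "real (hdist n x y) \<le> n"
    using hdist_le by simp
  also have "\<dots> \<le> \<epsilon> * n"
    using assms(1) mult_right_mono[of 1 \<epsilon> "real n"] by simp
  finally have "\<not> \<epsilon> * n < hdist n x y"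
    by simp
  then show ?thesis
    using assms(2) by (auto simp: eps_far_def)
qed

text \<open>For \<open>\<epsilon> \<ge> 1\<close> a string is \<open>\<epsilon>\<close>-far from \<open>P_A\<close> only if \<open>A = {}\<close>, so deciding
  \<open>A \<noteq> {}\<close> without any query suffices.\<close>
lemma one_sided_tester_no_queries:
  assumes "1 \<le> \<epsilon>"
  shows "one_sided_quantum_tester (2 ^ k) (P_A k A) \<epsilon> 0"
proof -
  define n :: nat where "n = 2 ^ k"
  define U0 where "U0 = monomial_mat id (\<lambda>_. 1)"
  define Acc :: "nat set" where "Acc = (if A = {} then {} else {0})"
  have "final_state n 1 x U0 [] 0 = 1" for x
    by (simp add: final_state_def mat_app_def U0_def monomial_mat_def n_def if_distrib[of "(*) _"]
        cong: if_cong)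
  then have accept: "accept_prob n 1 x U0 [] Acc = (if A = {} then 0 else 1)" for x
    by (simp add: accept_prob_def Acc_def)
  have "one_sided_quantum_tester n (P_A k A) \<epsilon> 0"
    unfolding one_sided_quantum_tester_def
  proof (intro exI conjI ballI allI impI)
    show "unitary_mat (2 * n * 1) U0"
      unfolding U0_def by (rule unitary_monomial_mat) auto
    fix x
    assume "x \<in> P_A k A"
    then have "A \<noteq> {}"
      by (auto simp: P_A_def)
    then show "accept_prob n 1 x U0 [] Acc = 1"
      using accept[of x] by simp
  next
    fix x
    assume "eps_far n \<epsilon> (P_A k A) x"
    then have "A = {}"
      using not_eps_far_ge_1[OF assms hadamard_in_P_A] by blast
    then show "accept_prob n 1 x U0 [] Acc \<le> 1 / 3"
      using accept[of x] by simp
  qed (auto simp: Acc_def n_def)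
  then show ?thesis
    by (simp add: n_def)
qed

lemma one_sided_tester_small_eps:
  assumes "A \<subseteq> {..<2 ^ k}" "0 < \<epsilon>" "\<epsilon> < 1"
  shows "one_sided_quantum_tester (2 ^ k) (P_A k A) \<epsilon> (nat \<lceil>2 / \<epsilon>\<rceil> + 2)"
    "real (nat \<lceil>2 / \<epsilon>\<rceil> + 2) \<le> 5 / \<epsilon>"
proof -
  define m where "m = nat \<lceil>2 / \<epsilon>\<rceil>"
  have "0 < 2 / \<epsilon>"
    using assms(2) by simp
  then have "real m = of_int \<lceil>2 / \<epsilon>\<rceil>"
    unfolding m_def by simp
  then have "2 / \<epsilon> \<le> m" "m \<le> 2 / \<epsilon> + 1"
    using le_of_int_ceiling of_int_ceiling_le_add_one by metis+
  then have em: "2 \<le> \<epsilon> * m"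
    using assms(2) by (simp add: field_simps)
  then have "0 < m"
    by (rule contrapos_pp) simp
  then show "one_sided_quantum_tester (2 ^ k) (P_A k A) \<epsilon> (m + 2)"
    using hadamard_tester.one_sided_tester[where k = k and m = m and A = A and \<epsilon> = \<epsilon>] assms em
    by (simp add: hadamard_tester_def)
  have "3 \<le> 3 / \<epsilon>"
    using assms(2,3) by (simp add: field_simps)
  with \<open>m \<le> 2 / \<epsilon> + 1\<close> show "real (m + 2) \<le> 5 / \<epsilon>"
    by (simp add: field_simps)
qed

theorem lemma3p2:
  shows "\<exists>c::real. \<forall>(k::nat) (A::nat set) (\<epsilon>::real).
           A \<subseteq> {..<2^k} \<and> \<epsilon> > 0 \<longrightarrow>
           (\<exists>T::nat. real T \<le> c / \<epsilon> \<and> one_sided_quantum_tester (2^k) (P_A k A) \<epsilon> T)"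
proof (intro exI[of _ "5::real"] allI impI)
  fix k :: nat and A :: "nat set" and \<epsilon> :: real
  assume "A \<subseteq> {..<2^k} \<and> \<epsilon> > 0"
  then show "\<exists>T::nat. real T \<le> 5 / \<epsilon> \<and> one_sided_quantum_tester (2^k) (P_A k A) \<epsilon> T"
    using one_sided_tester_no_queries[of \<epsilon> k A] one_sided_tester_small_eps[of A k \<epsilon>]
    by (cases "\<epsilon> < 1") (fastforce, force)
qed

end
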